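(* Let $A,B,C$ be finite sets and let $\omega$ be a probability distribution on $A\times B\times C$ with full support, i.e. $\omega^{ijk}>0$ for all $i\in A$, $j\in B$, $k\in C$. Then there exist a unique 2-comb $f\colon B\to A\otimes C$ in $\mathsf{Stoch}$ and a unique stochastic matrix $g\colon A\to B$ such that $$\omega^{ijk}=f_j^{ik}\,g_i^j\qquad\text{for all } i\in A,\ j\in B,\ k\in C,$$ i.e. $\omega$ equals the composite (in the category of nonnegative real matrices) obtained by copying the $A$-output of $f$, feeding one copy into $g$, copying the output of $g$, and feeding one copy of it back into the input $B$ of $f$, with outputs $A$, $B$, $C$.
   Context: $\mathsf{Stoch}$ is the category whose objects are finite sets and whose morphisms $h\colon X\to Y$ are matrices $(h_x^y)$ of nonnegative reals with $\sum_{y} h_x^y=1$ for each $x$ (row index as superscript, column index as subscript); states $I\to Y$ ($I$ a one-point set) are probability distributions, and a morphism $A_1\otimes A_2\to B_1\otimes B_2$ has entries $h_{a_1a_2}^{b_1b_2}$. A morphism $h$ has full support if it has no zero entries. A 2-comb in $\mathsf{Stoch}$ is a stochastic matrix $h\colon A_1\otimes A_2\to B_1\otimes B_2$ such that there is a stochastic matrix $h'\colon A_1\to B_1$ with $\sum_{b_2} h_{a_1a_2}^{b_1b_2}=h'^{\,b_1}_{a_1}$ for all $a_1,a_2,b_1$ (discarding the output $B_2$ equals $h'$ tensored with discarding $A_2$). Here $f\colon B\to A\otimes C$ is viewed as a 2-comb with $A_1=I$ trivial, $A_2=B$, $B_1=A$, $B_2=C$; thus the condition is that $\sum_{k\in C}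 f_j^{ik}$ is independent of $j\in B$. *)

theory Defs
  imports "HOL-Analysis.Analysis"
begin

text \<open>A stochastic matrix h : X \<rightarrow> Y in Stoch between finite sets (given as finite types),
  represented as h x y = h_x^y (input x, output y).\<close>
definition stochastic :: "('x::finite \<Rightarrow> 'y::finite \<Rightarrow> real) \<Rightarrow> bool" where
  "stochastic h \<longleftrightarrow> (\<forall>x y. 0 \<le> h x y) \<and> (\<forall>x. (\<Sum>y\<in>UNIV. h x y) = 1)"

definition distribution :: "('y::finite \<Rightarrow> real) \<Rightarrow> bool" where
  "distribution p \<longleftrightarrow> (\<forall>y. 0 \<le> p y) \<and> (\<Sum>y\<in>UNIV. p y) = 1"

text \<open>A 2-comb h : A1 \<otimes> A2 \<rightarrow> B1 \<otimes> B2: stochastic, and discarding B2 yields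
  h' \<otimes> discard_{A2} for some stochastic h' : A1 \<rightarrow> B1.\<close>
definition comb2 :: "('a1::finite \<times> 'a2::finite \<Rightarrow> 'b1::finite \<times> 'b2::finite \<Rightarrow> real) \<Rightarrow> bool" where
  "comb2 h \<longleftrightarrow> stochastic h \<and>
     (\<exists>h'::'a1 \<Rightarrow> 'b1 \<Rightarrow> real. stochastic h' \<and>
        (\<forall>a1 a2 b1. (\<Sum>b2\<in>UNIV. h (a1, a2) (b1, b2)) = h' a1 b1))"

text \<open>f : B \<rightarrow> A \<otimes> C viewed as a 2-comb with A1 = I (unit), A2 = B, B1 = A, B2 = C.\<close>
definition comb_B_AC :: "('b::finite \<Rightarrow> 'a::finite \<times> 'c::finite \<Rightarrow> real) \<Rightarrow> bool" where
  "comb_B_AC f \<longleftrightarrow> comb2 (\<lambda>(u::unit, j) (i, k). f j (i, k))"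

end

theory Submission
  imports Defs
begin

text \<open>Discarding \<open>C\<close> turns the comb condition into \<open>\<Sum>\<^sub>k f\<^sub>j\<^sup>i\<^sup>k = h(i)\<close>, and
  marginalising \<open>\<omega> = f g\<close> over \<open>C\<close> then gives \<open>\<omega>\<^sup>i\<^sup>j = h(i) g\<^sub>i\<^sup>j\<close>. Summing over \<open>j\<close>
  shows \<open>h(i) = \<omega>\<^sup>i\<close>, so \<open>g\<close> must be the conditional \<open>\<omega>\<^sup>i\<^sup>j / \<omega>\<^sup>i\<close> and \<open>f\<close> must be
  \<open>\<omega>\<^sup>i\<^sup>j\<^sup>k \<omega>\<^sup>i / \<omega>\<^sup>i\<^sup>j\<close>; full support makes these divisions legitimate, and this pair
  is indeed a solution.\<close>

lemma sum_UNIV_prod: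
  fixes h :: "'a::finite \<times> 'b::finite \<Rightarrow> 'c::comm_monoid_add"
  shows "(\<Sum>x\<in>UNIV. h x) = (\<Sum>i\<in>UNIV. \<Sum>j\<in>UNIV. h (i, j))"
  by (simp add: UNIV_Times_UNIV[symmetric] sum.cartesian_product del: UNIV_Times_UNIV)

lemma stochastic_const_iff_distribution:
  "stochastic (\<lambda>_::'x::finite. p) \<longleftrightarrow> distribution p"
  by (simp add: stochastic_def distribution_def)

lemma comb_B_AC_iff:
  fixes f :: "'b::finite \<Rightarrow> 'a::finite \<times> 'c::finite \<Rightarrow> real"
  shows "comb_B_AC f \<longleftrightarrow>
    stochastic f \<and> (\<exists>h. distribution h \<and> (\<forall>i j. (\<Sum>k\<in>UNIV. f j (i, k)) = h i))"
proof -
  have "stochastic (\<lambda>(u::unit, j) (i, k). f j (i, k)) \<longleftrightarrow> stochastic f"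
    by (auto simp: stochastic_def split: prod.splits)
  moreover have "(\<exists>h'::unit \<Rightarrow> 'a \<Rightarrow> real. stochastic h' \<and>
        (\<forall>u j i. (\<Sum>k\<in>UNIV. f j (i, k)) = h' u i)) \<longleftrightarrow>
      (\<exists>h. distribution h \<and> (\<forall>i j. (\<Sum>k\<in>UNIV. f j (i, k)) = h i))"
  proof
    assume "\<exists>h'::unit \<Rightarrow> 'a \<Rightarrow> real. stochastic h' \<and> (\<forall>u j i. (\<Sum>k\<in>UNIV. f j (i, k)) = h' u i)"
    then obtain h' :: "unit \<Rightarrow> 'a \<Rightarrow> real" where
      "stochastic h'" "\<forall>u j i. (\<Sum>k\<in>UNIV. f j (i, k)) = h' u i" by blast
    then show "\<exists>h. distribution h \<and> (\<forall>i j. (\<Sum>k\<in>UNIV. f j (i, k)) = h i)"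
      by (intro exI[of _ "h' ()"]) (auto simp: stochastic_def distribution_def)
  next
    assume "\<exists>h. distribution h \<and> (\<forall>i j. (\<Sum>k\<in>UNIV. f j (i, k)) = h i)"
    then show "\<exists>h'::unit \<Rightarrow> 'a \<Rightarrow> real. stochastic h' \<and> (\<forall>u j i. (\<Sum>k\<in>UNIV. f j (i, k)) = h' u i)"
      by (metis stochastic_const_iff_distribution)
  qed
  ultimately show ?thesis
    unfolding comb_B_AC_def comb2_def by simp
qed

definition marginal_AB :: "('a \<times> 'b \<times> 'c::finite \<Rightarrow> real) \<Rightarrow> 'a \<Rightarrow> 'b \<Rightarrow> real" where
  "marginal_AB \<omega> i j = (\<Sum>k\<in>UNIV. \<omega> (i, j, k))"

definition marginal_A :: "('a \<times> 'b::finite \<times> 'c::finite \<Rightarrow> real) \<Rightarrow> 'a \<Rightarrow> real" where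
  "marginal_A \<omega> i = (\<Sum>j\<in>UNIV. marginal_AB \<omega> i j)"

definition conditional_B_given_A :: "('a \<times> 'b::finite \<times> 'c::finite \<Rightarrow> real) \<Rightarrow> 'a \<Rightarrow> 'b \<Rightarrow> real" where
  "conditional_B_given_A \<omega> i j = marginal_AB \<omega> i j / marginal_A \<omega> i"

definition conditional_comb :: "('a \<times> 'b::finite \<times> 'c::finite \<Rightarrow> real) \<Rightarrow> 'b \<Rightarrow> 'a \<times> 'c \<Rightarrow> real" where
  "conditional_comb \<omega> j = (\<lambda>(i, k). \<omega> (i, j, k) * marginal_A \<omega> i / marginal_AB \<omega> i j)"

lemma marginal_AB_pos:
  fixes \<omega> :: "'a \<times> 'b \<times> 'c::finite \<Rightarrow> real"
  assumes "\<forall>i j k. \<omega> (i, j, k) > 0"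
  shows "marginal_AB \<omega> i j > 0"
  unfolding marginal_AB_def by (rule sum_pos) (use assms in auto)

lemma marginal_A_pos:
  fixes \<omega> :: "'a \<times> 'b::finite \<times> 'c::finite \<Rightarrow> real"
  assumes "\<forall>i j k. \<omega> (i, j, k) > 0"
  shows "marginal_A \<omega> i > 0"
  unfolding marginal_A_def by (rule sum_pos) (auto intro: marginal_AB_pos[OF assms])

lemma distribution_marginal_A:
  fixes \<omega> :: "'a::finite \<times> 'b::finite \<times> 'c::finite \<Rightarrow> real"
  assumes "distribution \<omega>"
  shows "distribution (marginal_A \<omega>)"
  using assms
  by (simp add: distribution_def marginal_A_def marginal_AB_def sum_UNIV_prod sum_nonneg)

lemma stochastic_conditional_B_given_A:
  fixes \<omega> :: "'a::finite \<times> 'b::finite \<times> 'c::finite \<Rightarrow> real"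
  assumes "\<forall>i j k. \<omega> (i, j, k) > 0"
  shows "stochastic (conditional_B_given_A \<omega>)"
  using marginal_AB_pos[OF assms] marginal_A_pos[OF assms]
  by (simp add: stochastic_def conditional_B_given_A_def less_imp_le less_imp_neq[THEN not_sym]
      flip: sum_divide_distrib marginal_A_def)

lemma sum_conditional_comb:
  fixes \<omega> :: "'a \<times> 'b::finite \<times> 'c::finite \<Rightarrow> real"
  assumes "\<forall>i j k. \<omega> (i, j, k) > 0"
  shows "(\<Sum>k\<in>UNIV. conditional_comb \<omega> j (i, k)) = marginal_A \<omega> i"
proof -
  have "(\<Sum>k\<in>UNIV. conditional_comb \<omega> j (i, k))
      = marginal_AB \<omega> i j * marginal_A \<omega> i / marginal_AB \<omega> i j"
    by (simp add: conditional_comb_def marginal_AB_def sum_distrib_right sum_divide_distrib)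
  then show ?thesis
    using marginal_AB_pos[OF assms, of i j] by simp
qed

lemma comb_conditional_comb:
  fixes \<omega> :: "'a::finite \<times> 'b::finite \<times> 'c::finite \<Rightarrow> real"
  assumes "distribution \<omega>" and "\<forall>i j k. \<omega> (i, j, k) > 0"
  shows "comb_B_AC (conditional_comb \<omega>)"
  unfolding comb_B_AC_iff
proof (intro conjI exI)
  show "stochastic (conditional_comb \<omega>)"
    unfolding stochastic_def
  proof (intro conjI allI)
    fix j ik
    show "0 \<le> conditional_comb \<omega> j ik"
      using assms(2) marginal_AB_pos[OF assms(2)] marginal_A_pos[OF assms(2)]
      by (cases ik) (simp add: conditional_comb_def less_imp_le)
  next
    fix j
    show "(\<Sum>ik\<in>UNIV. conditional_comb \<omega> j ik) = 1"
      using distribution_marginal_A[OF assms(1)]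
      by (simp add: sum_UNIV_prod sum_conditional_comb[OF assms(2)] distribution_def)
  qed
qed (use distribution_marginal_A[OF assms(1)] sum_conditional_comb[OF assms(2)] in auto)

lemma factorization_conditional:
  fixes \<omega> :: "'a::finite \<times> 'b::finite \<times> 'c::finite \<Rightarrow> real"
  assumes "\<forall>i j k. \<omega> (i, j, k) > 0"
  shows "\<omega> (i, j, k) = conditional_comb \<omega> j (i, k) * conditional_B_given_A \<omega> i j"
  using marginal_AB_pos[OF assms, of i j] marginal_A_pos[OF assms, of i]
  by (simp add: conditional_comb_def conditional_B_given_A_def)

lemma factorization_determines_stochastic:
  fixes \<omega> :: "'a::finite \<times> 'b::finite \<times> 'c::finite \<Rightarrow> real"
  assumes "comb_B_AC f" and "stochastic g"
    and factor: "\<And>i j k. \<omega> (i, j, k) = f j (i, k) * g i j"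
    and "\<forall>i j k. \<omega> (i, j, k) > 0"
  shows "g = conditional_B_given_A \<omega>"
proof (intro ext)
  fix i j
  obtain h where h: "\<And>i j. (\<Sum>k\<in>UNIV. f j (i, k)) = h i"
    using assms(1) unfolding comb_B_AC_iff by blast
  have joint: "marginal_AB \<omega> i j = h i * g i j" for i j
    by (simp add: marginal_AB_def factor h flip: sum_distrib_right)
  have "marginal_A \<omega> i = h i"
    using assms(2) by (simp add: marginal_A_def joint stochastic_def flip: sum_distrib_left)
  then show "g i j = conditional_B_given_A \<omega> i j"
    using joint[of i j] marginal_A_pos[OF assms(4), of i]
    by (simp add: conditional_B_given_A_def)
qed

lemma factorization_determines_comb:
  fixes \<omega> :: "'a::finite \<times> 'b::finite \<times> 'c::finite \<Rightarrow> real"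
  assumes "comb_B_AC f" and "stochastic g"
    and factor: "\<And>i j k. \<omega> (i, j, k) = f j (i, k) * g i j"
    and pos: "\<forall>i j k. \<omega> (i, j, k) > 0"
  shows "f = conditional_comb \<omega>"
proof (intro ext)
  fix j :: 'b and ik :: "'a \<times> 'c"
  obtain i k where ik: "ik = (i, k)" by (cases ik)
  have "g i j = conditional_B_given_A \<omega> i j"
    using factorization_determines_stochastic[OF assms] by simp
  moreover have "conditional_B_given_A \<omega> i j > 0"
    using marginal_AB_pos[OF pos] marginal_A_pos[OF pos] by (simp add: conditional_B_given_A_def)
  ultimately show "f j ik = conditional_comb \<omega> j ik"
    using factor[of i j k] factorization_conditional[OF pos, of i j k]
    by (simp add: ik)
qed

theorem theorem1:
  fixes \<omega> :: "'a::finite \<times> 'b::finite \<times> 'c::finite \<Rightarrow> real"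
  assumes "distribution \<omega>"
    and "\<forall>i j k. \<omega> (i, j, k) > 0"
  shows "\<exists>!(f, g). comb_B_AC (f :: 'b \<Rightarrow> 'a \<times> 'c \<Rightarrow> real) \<and>
                   stochastic (g :: 'a \<Rightarrow> 'b \<Rightarrow> real) \<and>
                   (\<forall>i j k. \<omega> (i, j, k) = f j (i, k) * g i j)"
proof (rule ex1I[of _ "(conditional_comb \<omega>, conditional_B_given_A \<omega>)"])
  show "case (conditional_comb \<omega>, conditional_B_given_A \<omega>) of (f, g) \<Rightarrow>
      comb_B_AC f \<and> stochastic g \<and> (\<forall>i j k. \<omega> (i, j, k) = f j (i, k) * g i j)"
    using comb_conditional_comb[OF assms] stochastic_conditional_B_given_A[OF assms(2)]
      factorization_conditional[OF assms(2)] by simp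
  fix fg :: "('b \<Rightarrow> 'a \<times> 'c \<Rightarrow> real) \<times> ('a \<Rightarrow> 'b \<Rightarrow> real)"
  assume "case fg of (f, g) \<Rightarrow>
      comb_B_AC f \<and> stochastic g \<and> (\<forall>i j k. \<omega> (i, j, k) = f j (i, k) * g i j)"
  then show "fg = (conditional_comb \<omega>, conditional_B_given_A \<omega>)"
    using factorization_determines_comb[OF _ _ _ assms(2)]
      factorization_determines_stochastic[OF _ _ _ assms(2)]
    by (cases fg) auto
qed

end
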